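(* Let $(\mathfrak g,J,\omega)$ be a $2n$-dimensional hermitian Lie algebra such that $\mathfrak g$ has a codimension-one abelian ideal. Then $(\mathfrak g,J,\omega)$ is equivalent (via a Lie algebra isomorphism intertwining the complex structures and the hermitian forms) to $(\mathbb R^{2n},\mu_{A,c,d_1,\dots,d_{2n-2}},J,\omega)$ for some $A\in\mathfrak{gl}_{n-1}(\mathbb C)$, $c\ge0$ and $d_i\in\mathbb R$. Moreover, the Chern-Ricci form and Chern-Ricci operator of $(\mathbb R^{2n},\mu_{A,c,d_1,\dots,d_{2n-2}},J,\omega)$ are $$p=-\tfrac12 c(2c+\operatorname{tr}A)\,e^1\wedge e^{2n},\qquad P=-\tfrac12 c(2c+\operatorname{tr}A)\,\pi,$$ where $\pi$ is the linear map with $\pi e_1=e_1$, $\pi e_{2n}=e_{2n}$ and $\pi e_i=0$ for $2\le i\le 2n-1$.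
   Context: A hermitian Lie algebra $(\mathfrak g,J,\omega)$: a real Lie algebra, $J$ with $J^2=-I$ integrable ($[JX,JY]=[X,Y]+J[JX,Y]+J[X,JY]$), and a nondegenerate 2-form $\omega$ with $\omega(J\cdot,J\cdot)=\omega$ and $g=\omega(\cdot,J\cdot)$ positive definite. Chern-Ricci form $p(X,Y)=-\tfrac12\operatorname{tr}(J\,\mathrm{ad}_{[X,Y]})+\tfrac12\operatorname{tr}(\mathrm{ad}_{J[X,Y]})$, Chern-Ricci operator $P$ with $p=\omega(P\cdot,\cdot)$. Let $\{e_1,\dots,e_{2n}\}$ be the standard basis of $\mathbb R^{2n}$ with dual basis $\{e^i\}$, $\omega=e^1\wedge e^{2n}+\dots+e^n\wedge e^{n+1}$, and $J$ defined by $Je_i=e_{2n+1-i}$, $Je_{2n+1-i}=-e_i$ for $1\le i\le n$. Let $\mathfrak n=\mathrm{span}\{e_1,\dots,e_{2n-1}\}$. For $c,d_1,\dots,d_{2n-2}\in\mathbb R$ and a real linear map $A$ of $V=\mathrm{span}\{e_2,\dots,e_{2n-1}\}$ commuting with $J|_V$ (written $A\in\mathfrak{gl}_{n-1}(\mathbb C)$), $\mu=\mu_{A,c,d_1,\dots,d_{2n-2}}$ is the Lie bracket for which $\mathfrak n$ is an abelian ideal and $\mathrm{ad}_\mu e_{2n}$ is given by $e_1\mapsto ce_1+\sum_{i=1}^{2n-2}d_ie_{i+1}$, $v\mapsto Av$ for $v\in V$, $e_{2n}\mapsto0$. $\operatorname{tr}A$ denotes the trace of $A$ as a real endomorphism of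 $V$. *)

theory Defs
  imports "HOL-Analysis.Analysis"
begin

definition lie_algebra :: "('a::real_vector \<Rightarrow> 'a \<Rightarrow> 'a) \<Rightarrow> bool" where
  "lie_algebra br \<longleftrightarrow> bilinear br \<and> (\<forall>x. br x x = 0) \<and>
     (\<forall>x y z. br x (br y z) + br y (br z x) + br z (br x y) = 0)"

definition integrable_cx_structure :: "('a::real_vector \<Rightarrow> 'a \<Rightarrow> 'a) \<Rightarrow> ('a \<Rightarrow> 'a) \<Rightarrow> bool" where
  "integrable_cx_structure br J \<longleftrightarrow> linear J \<and> (\<forall>x. J (J x) = - x) \<and>
     (\<forall>x y. br (J x) (J y) = br x y + J (br (J x) y) + J (br x (J y)))"

definition hermitian_lie_algebra ::
  "('a::real_vector \<Rightarrow> 'a \<Rightarrow> 'a) \<Rightarrow> ('a \<Rightarrow> 'a) \<Rightarrow> ('a \<Rightarrow> 'a \<Rightarrow> real) \<Rightarrow> bool" where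
  "hermitian_lie_algebra br J \<omega> \<longleftrightarrow> lie_algebra br \<and> integrable_cx_structure br J \<and>
     bilinear \<omega> \<and> (\<forall>x y. \<omega> x y = - \<omega> y x) \<and>
     (\<forall>x. (\<forall>y. \<omega> x y = 0) \<longrightarrow> x = 0) \<and>
     (\<forall>x y. \<omega> (J x) (J y) = \<omega> x y) \<and>
     (\<forall>x. x \<noteq> 0 \<longrightarrow> \<omega> x (J x) > 0)"

definition lie_ideal :: "('a::real_vector \<Rightarrow> 'a \<Rightarrow> 'a) \<Rightarrow> 'a set \<Rightarrow> bool" where
  "lie_ideal br I \<longleftrightarrow> subspace I \<and> (\<forall>x y. y \<in> I \<longrightarrow> br x y \<in> I)"

definition abelian_subalg :: "('a::real_vector \<Rightarrow> 'a \<Rightarrow> 'a) \<Rightarrow> 'a set \<Rightarrow> bool" where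
  "abelian_subalg br I \<longleftrightarrow> (\<forall>x\<in>I. \<forall>y\<in>I. br x y = 0)"

text \<open>Vectors of R^(2n) are represented as functions nat to real, with coordinates
  indexed 1..2n (and zero elsewhere); e i is the i-th standard basis vector.\<close>

definition Rsp :: "nat \<Rightarrow> (nat \<Rightarrow> real) set" where
  "Rsp n = {v. \<forall>i. i \<notin> {1..2*n} \<longrightarrow> v i = 0}"

definition ebas :: "nat \<Rightarrow> nat \<Rightarrow> real" where
  "ebas i = (\<lambda>j. if j = i then 1 else 0)"

definition Vsp :: "nat \<Rightarrow> (nat \<Rightarrow> real) set" where
  "Vsp n = {v. \<forall>i. i \<notin> {2..2*n-1} \<longrightarrow> v i = 0}"

text \<open>J e_i = e_(2n+1-i), J e_(2n+1-i) = - e_i for 1 \<le> i \<le> n.\<close>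
definition Jstd :: "nat \<Rightarrow> (nat \<Rightarrow> real) \<Rightarrow> (nat \<Rightarrow> real)" where
  "Jstd n v = (\<lambda>j. if 1 \<le> j \<and> j \<le> n then - v (2*n+1-j)
                   else if n+1 \<le> j \<and> j \<le> 2*n then v (2*n+1-j) else 0)"

definition \<omega>std :: "nat \<Rightarrow> (nat \<Rightarrow> real) \<Rightarrow> (nat \<Rightarrow> real) \<Rightarrow> real" where
  "\<omega>std n v w = (\<Sum>i=1..n. v i * w (2*n+1-i) - v (2*n+1-i) * w i)"

definition Amap :: "nat \<Rightarrow> (nat \<Rightarrow> nat \<Rightarrow> real) \<Rightarrow> (nat \<Rightarrow> real) \<Rightarrow> (nat \<Rightarrow> real)" where
  "Amap n a v = (\<lambda>i. if 2 \<le> i \<and> i \<le> 2*n-1 then (\<Sum>j=2..2*n-1. a i j * v j) else 0)"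

text \<open>A commutes with J restricted to V (i.e. A is in gl_(n-1)(C)).\<close>
definition A_complex :: "nat \<Rightarrow> (nat \<Rightarrow> nat \<Rightarrow> real) \<Rightarrow> bool" where
  "A_complex n a \<longleftrightarrow> (\<forall>v\<in>Vsp n. Amap n a (Jstd n v) = Jstd n (Amap n a v))"

definition trA :: "nat \<Rightarrow> (nat \<Rightarrow> nat \<Rightarrow> real) \<Rightarrow> real" where
  "trA n a = (\<Sum>i=2..2*n-1. a i i)"

text \<open>D = ad_mu e_(2n) restricted to n = span(e_1..e_(2n-1)):
  e_1 \<mapsto> c e_1 + sum d_i e_(i+1), v \<mapsto> A v on V; it only reads coordinates 1..2n-1.\<close>
definition Dmap :: "nat \<Rightarrow> (nat \<Rightarrow> nat \<Rightarrow> real) \<Rightarrow> real \<Rightarrow> (nat \<Rightarrow> real) \<Rightarrow> (nat \<Rightarrow> real) \<Rightarrow> (nat \<Rightarrow> real)" where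
  "Dmap n a c d v = (\<lambda>i. if i = 1 then c * v 1
       else if 2 \<le> i \<and> i \<le> 2*n-1 then d (i-1) * v 1 + Amap n a v i else 0)"

text \<open>The bracket mu_(A,c,d_1..d_(2n-2)): n abelian ideal, ad e_(2n) = D on n.
  [x' + x_(2n) e_(2n), y' + y_(2n) e_(2n)] = x_(2n) D y' - y_(2n) D x'.\<close>
definition mu :: "nat \<Rightarrow> (nat \<Rightarrow> nat \<Rightarrow> real) \<Rightarrow> real \<Rightarrow> (nat \<Rightarrow> real) \<Rightarrow> (nat \<Rightarrow> real) \<Rightarrow> (nat \<Rightarrow> real) \<Rightarrow> (nat \<Rightarrow> real)" where
  "mu n a c d x y = (\<lambda>i. x (2*n) * Dmap n a c d y i - y (2*n) * Dmap n a c d x i)"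

definition linear_to_R :: "('a::real_vector \<Rightarrow> (nat \<Rightarrow> real)) \<Rightarrow> bool" where
  "linear_to_R \<phi> \<longleftrightarrow> (\<forall>x y. \<phi> (x + y) = (\<lambda>i. \<phi> x i + \<phi> y i)) \<and>
     (\<forall>r x. \<phi> (r *\<^sub>R x) = (\<lambda>i. r * \<phi> x i))"

definition trR :: "nat \<Rightarrow> ((nat \<Rightarrow> real) \<Rightarrow> (nat \<Rightarrow> real)) \<Rightarrow> real" where
  "trR n f = (\<Sum>i=1..2*n. f (ebas i) i)"

definition chern_ricci_form ::
  "nat \<Rightarrow> ((nat \<Rightarrow> real) \<Rightarrow> (nat \<Rightarrow> real) \<Rightarrow> (nat \<Rightarrow> real)) \<Rightarrow> ((nat \<Rightarrow> real) \<Rightarrow> (nat \<Rightarrow> real))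
     \<Rightarrow> (nat \<Rightarrow> real) \<Rightarrow> (nat \<Rightarrow> real) \<Rightarrow> real" where
  "chern_ricci_form n br J X Y =
     - (1/2) * trR n (\<lambda>v. J (br (br X Y) v)) + (1/2) * trR n (\<lambda>v. br (J (br X Y)) v)"

definition chern_ricci_op ::
  "nat \<Rightarrow> ((nat \<Rightarrow> real) \<Rightarrow> (nat \<Rightarrow> real) \<Rightarrow> (nat \<Rightarrow> real)) \<Rightarrow> ((nat \<Rightarrow> real) \<Rightarrow> (nat \<Rightarrow> real))
     \<Rightarrow> ((nat \<Rightarrow> real) \<Rightarrow> (nat \<Rightarrow> real) \<Rightarrow> real) \<Rightarrow> (nat \<Rightarrow> real) \<Rightarrow> (nat \<Rightarrow> real)" where
  "chern_ricci_op n br J \<omega> = (THE P. (\<forall>X. X \<notin> Rsp n \<longrightarrow> P X = (\<lambda>i. 0)) \<and>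
      (\<forall>X\<in>Rsp n. P X \<in> Rsp n) \<and>
      (\<forall>X\<in>Rsp n. \<forall>Y\<in>Rsp n. chern_ricci_form n br J X Y = \<omega> (P X) Y))"

definition pistd :: "nat \<Rightarrow> (nat \<Rightarrow> real) \<Rightarrow> (nat \<Rightarrow> real)" where
  "pistd n v = (\<lambda>i. if i = 1 \<or> i = 2*n then v i else 0)"

end

theory Submission
  imports Defs
begin

(*
  Let g = omega(-, J -) be the hermitian metric and N a g-unit normal to the codimension-one
  abelian ideal I, its sign chosen so that g([N, JN], JN) >= 0.  Completing e_1 = -JN to a
  g-unitary frame e_1, ..., e_n and putting e_(2n+1-i) = J e_i gives an orthonormal basis with
  e_(2n) = N in which J and omega take their standard form.  As I is abelian, the bracket is
  determined by ad N restricted to I, whose matrix is the map D of mu.  Integrability of J,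
  applied to JN and to vectors of I \<inter> J I, shows that ad N commutes with J there and keeps
  it orthogonal to e_1: this yields both the shape of D and A \<in> gl(n-1, C).

  For mu itself every bracket Z = [X, Y] lies in I and ad Z only acts on e_(2n), so both traces
  in the Chern-Ricci form reduce to single entries: tr (J ad Z) = -c Z_1 and
  tr (ad (J Z)) = (c + tr A) Z_1, while Z_1 = c (X_(2n) Y_1 - X_1 Y_(2n)).
*)

section \<open>The model algebra and its Chern-Ricci form\<close>

lemma sum_eq_single_term:
  assumes "finite A" "k \<in> A" "\<And>i. i \<in> A \<Longrightarrow> i \<noteq> k \<Longrightarrow> h i = 0"
  shows "(\<Sum>i\<in>A. h i) = h k"
  using sum.mono_neutral_right[of A "{k}" h] assms by auto

lemma sum_first_middle_last:
  fixes n :: nat assumes "1 \<le> n"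
  shows "(\<Sum>j=1..2*n. h j) = h 1 + (\<Sum>j=2..2*n-1. h j) + h (2*n)"
proof -
  obtain m where m: "n = Suc m" using assms by (cases n) auto
  have "(\<Sum>j=1..2*n. h j) = (\<Sum>j=1..2*m+1. h j) + h (2*m+2)" using m by simp
  also have "(\<Sum>j=1..2*m+1. h j) = h 1 + (\<Sum>j=2..2*m+1. h j)"
    by (subst sum.atLeast_Suc_atMost) (auto simp: numeral_2_eq_2)
  finally show ?thesis using m by (simp add: numeral_2_eq_2)
qed

lemma Dmap_first: "Dmap n a c d v 1 = c * v 1"
  unfolding Dmap_def by auto

lemma Dmap_last: "1 \<le> n \<Longrightarrow> Dmap n a c d v (2*n) = 0"
  unfolding Dmap_def by auto

lemma Dmap_eq_Amap: "v 1 = 0 \<Longrightarrow> Dmap n a c d v = Amap n a v"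
  unfolding Dmap_def Amap_def by (auto simp: fun_eq_iff)

lemma Dmap_ignores_last:
  assumes "1 \<le> n" "\<And>i. i \<noteq> 2*n \<Longrightarrow> v i = w i"
  shows "Dmap n a c d v = Dmap n a c d w"
proof -
  have "Amap n a v = Amap n a w" unfolding Amap_def
    using assms by (intro ext) (auto intro!: sum.cong)
  moreover have "v 1 = w 1" using assms by auto
  ultimately show ?thesis unfolding Dmap_def by (auto simp: fun_eq_iff)
qed

lemma trace_Dmap:
  assumes "1 \<le> n" shows "(\<Sum>i=1..2*n. Dmap n a c d (ebas i) i) = c + trA n a"
proof -
  have "Dmap n a c d (ebas i) i = a i i" if "i \<in> {2..2*n-1}" for i
  proof -
    have "Amap n a (ebas i) i = (\<Sum>j=2..2*n-1. a i j * ebas i j)"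
      using that unfolding Amap_def by simp
    also have "\<dots> = a i i * ebas i i"
      using that by (intro sum_eq_single_term) (auto simp: ebas_def)
    finally have "Amap n a (ebas i) i = a i i * ebas i i" .
    then show ?thesis using that unfolding Dmap_def by (simp add: ebas_def)
  qed
  moreover have "Dmap n a c d (ebas 1) 1 = c" unfolding Dmap_def ebas_def by simp
  ultimately show ?thesis
    using sum_first_middle_last[OF assms, of "\<lambda>i. Dmap n a c d (ebas i) i"] Dmap_last[OF assms]
    unfolding trA_def by simp
qed

lemma omega_std_Jstd: "\<omega>std n v w = - (\<Sum>i=1..2*n. v i * Jstd n w i)"
proof -
  have split: "(\<Sum>i=1..2*n. v i * Jstd n w i) =
      (\<Sum>i=1..n. v i * Jstd n w i) + (\<Sum>i=n+1..2*n. v i * Jstd n w i)"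
    using sum.ub_add_nat[of 1 n "\<lambda>i. v i * Jstd n w i" n] by (cases "n = 0") (auto simp: mult_2)
  have low: "(\<Sum>i=1..n. v i * Jstd n w i) = - (\<Sum>i=1..n. v i * w (2*n+1-i))"
    unfolding Jstd_def by (simp add: sum_negf[symmetric])
  have high: "(\<Sum>i=n+1..2*n. v i * Jstd n w i) = (\<Sum>i=1..n. v (2*n+1-i) * w i)"
    by (rule sum.reindex_bij_witness[of _ "\<lambda>i. 2*n+1-i" "\<lambda>i. 2*n+1-i"]) (auto simp: Jstd_def)
  show ?thesis unfolding \<omega>std_def split low high by (simp add: sum_subtractf)
qed

lemma omega_std_ebas:
  assumes "j \<in> {1..2*n}"
  shows "\<omega>std n w (ebas j) = (if j \<le> n then - w (2*n+1-j) else w (2*n+1-j))"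
proof (cases "j \<le> n")
  case True
  have "\<omega>std n w (ebas j) = w j * ebas j (2*n+1-j) - w (2*n+1-j) * ebas j j"
    unfolding \<omega>std_def using assms True by (intro sum_eq_single_term) (auto simp: ebas_def)
  then show ?thesis using True by (simp add: ebas_def)
next
  case False
  have "\<omega>std n w (ebas j) = w (2*n+1-j) * ebas j (2*n+1-(2*n+1-j))
      - w (2*n+1-(2*n+1-j)) * ebas j (2*n+1-j)"
    unfolding \<omega>std_def using assms False by (intro sum_eq_single_term) (auto simp: ebas_def)
  then show ?thesis using assms False by (simp add: ebas_def)
qed

lemma omega_std_eq_imp_eq:
  assumes "u \<in> Rsp n" "v \<in> Rsp n" and eq: "\<forall>Y\<in>Rsp n. \<omega>std n u Y = \<omega>std n v Y"
  shows "u = v"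
proof
  fix k
  show "u k = v k"
  proof (cases "k \<in> {1..2*n}")
    case False then show ?thesis using assms unfolding Rsp_def by auto
  next
    case True
    then have "ebas (2*n+1-k) \<in> Rsp n" "2*n+1-k \<in> {1..2*n}" "2*n+1-(2*n+1-k) = k"
      unfolding Rsp_def ebas_def by auto
    then show ?thesis using eq omega_std_ebas[of "2*n+1-k" n u] omega_std_ebas[of "2*n+1-k" n v]
      by (auto split: if_splits)
  qed
qed

lemma chern_ricci_form_mu:
  assumes n: "1 \<le> n"
  shows "chern_ricci_form n (mu n a c d) (Jstd n) X Y
           = - (1/2) * c * (2*c + trA n a) * (X 1 * Y (2*n) - X (2*n) * Y 1)"
proof -
  define Z where "Z = mu n a c d X Y"
  have Z_last: "Z (2*n) = 0" unfolding Z_def mu_def using Dmap_last[OF n] by simp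
  have Z_first: "Z 1 = c * (X (2*n) * Y 1 - Y (2*n) * X 1)"
    unfolding Z_def mu_def Dmap_first by (simp add: algebra_simps)
  have "trR n (\<lambda>v. Jstd n (mu n a c d Z v)) = Jstd n (mu n a c d Z (ebas (2*n))) (2*n)"
    unfolding trR_def
  proof (rule sum_eq_single_term)
    fix i assume "i \<in> {1..2*n}" "i \<noteq> 2*n"
    then show "Jstd n (mu n a c d Z (ebas i)) i = 0"
      using Z_last unfolding Jstd_def mu_def ebas_def by auto
  qed (use n in auto)
  also have "\<dots> = - c * Z 1"
    using n Z_last Dmap_first[of n a c d Z] unfolding Jstd_def mu_def ebas_def by auto
  finally have J_ad: "trR n (\<lambda>v. Jstd n (mu n a c d Z v)) = - c * Z 1" .
  have "trR n (mu n a c d (Jstd n Z)) =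
      (\<Sum>i=1..2*n. Jstd n Z (2*n) * Dmap n a c d (ebas i) i)"
    unfolding trR_def mu_def using Dmap_last[OF n] by (intro sum.cong) (auto simp: ebas_def)
  also have "\<dots> = Z 1 * (c + trA n a)"
    using trace_Dmap[OF n] n by (simp add: sum_distrib_left[symmetric] Jstd_def)
  finally have ad_J: "trR n (mu n a c d (Jstd n Z)) = Z 1 * (c + trA n a)" .
  show ?thesis
    unfolding chern_ricci_form_def Z_def[symmetric] J_ad ad_J Z_first by (simp add: algebra_simps)
qed

lemma chern_ricci_op_mu:
  assumes n: "1 \<le> n" and X: "X \<in> Rsp n"
  shows "chern_ricci_op n (mu n a c d) (Jstd n) (\<omega>std n) X
           = (\<lambda>i. (- (1/2) * c * (2*c + trA n a)) * pistd n X i)"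
proof -
  define k where "k = - (1/2) * c * (2*c + trA n a)"
  define P0 where "P0 X = (if X \<in> Rsp n then (\<lambda>i. k * pistd n X i) else (\<lambda>i. 0))" for X
  have omega_P0: "\<omega>std n (\<lambda>i. k * pistd n X i) Y = k * (X 1 * Y (2*n) - X (2*n) * Y 1)" for X Y
  proof -
    have "\<omega>std n (\<lambda>i. k * pistd n X i) Y
        = k * pistd n X 1 * Y (2*n+1-1) - k * pistd n X (2*n+1-1) * Y 1"
      unfolding \<omega>std_def using n by (intro sum_eq_single_term) (auto simp: pistd_def)
    then show ?thesis using n by (simp add: pistd_def algebra_simps)
  qed
  let ?is_op = "\<lambda>P. (\<forall>X. X \<notin> Rsp n \<longrightarrow> P X = (\<lambda>i. 0)) \<and> (\<forall>X\<in>Rsp n. P X \<in> Rsp n) \<and>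
      (\<forall>X\<in>Rsp n. \<forall>Y\<in>Rsp n. chern_ricci_form n (mu n a c d) (Jstd n) X Y = \<omega>std n (P X) Y)"
  have P0: "?is_op P0"
    using n omega_P0 chern_ricci_form_mu[OF n]
    unfolding P0_def k_def Rsp_def pistd_def by auto
  have unique: "P = P0" if "?is_op P" for P
  proof
    fix X show "P X = P0 X"
      using that P0 omega_std_eq_imp_eq[of "P X" n "P0 X"] by (cases "X \<in> Rsp n") auto
  qed
  have "chern_ricci_op n (mu n a c d) (Jstd n) (\<omega>std n) = P0"
    unfolding chern_ricci_op_def by (rule the_equality[of ?is_op, OF P0 unique])
  then show ?thesis using X unfolding P0_def k_def by simp
qed

section \<open>Orthonormal bases for a positive definite form\<close>

definition orthonormal_wrt :: "('a::real_vector \<Rightarrow> 'a \<Rightarrow> real) \<Rightarrow> 'a set \<Rightarrow> bool" where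
  "orthonormal_wrt g S \<longleftrightarrow> (\<forall>s\<in>S. \<forall>t\<in>S. g s t = (if s = t then 1 else 0))"

locale inner_form =
  fixes g :: "'a::euclidean_space \<Rightarrow> 'a \<Rightarrow> real"
  assumes bilinear: "bilinear g" and symmetric: "g x y = g y x"
    and positive: "x \<noteq> 0 \<Longrightarrow> g x x > 0"
begin

lemma lmul: "g (c *\<^sub>R x) z = c * g x z" and rmul: "g z (c *\<^sub>R x) = c * g z x"
  using bilinear_lmul[OF bilinear] bilinear_rmul[OF bilinear] by simp_all

lemmas form_simps = lmul rmul bilinear_ladd[OF bilinear] bilinear_radd[OF bilinear]
  bilinear_lsub[OF bilinear] bilinear_rsub[OF bilinear]
  bilinear_lneg[OF bilinear] bilinear_rneg[OF bilinear]
  bilinear_lzero[OF bilinear] bilinear_rzero[OF bilinear]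

lemma sum_left: "g (\<Sum>i\<in>A. c i *\<^sub>R v i) z = (\<Sum>i\<in>A. c i * g (v i) z)"
proof -
  have "linear (\<lambda>x. g x z)" using bilinear unfolding bilinear_def by auto
  then have "g (\<Sum>i\<in>A. c i *\<^sub>R v i) z = (\<Sum>i\<in>A. g (c i *\<^sub>R v i) z)"
    by (rule linear_sum)
  then show ?thesis by (simp add: lmul)
qed

lemma orthogonal_span:
  assumes "\<forall>s\<in>S. g x s = 0" and "y \<in> span S" shows "g x y = 0"
proof -
  have "subspace {y. g x y = 0}"
    unfolding subspace_def by (simp add: form_simps)
  then show ?thesis using span_induct[of y S "\<lambda>y. g x y = 0"] assms by auto
qed

lemma orthonormal_independent:
  assumes "orthonormal_wrt g S" shows "independent S"
proof
  assume "dependent S"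
  then obtain a where a: "a \<in> S" "a \<in> span (S - {a})" by (auto simp: dependent_def)
  have "\<forall>s\<in>S - {a}. g a s = 0" using assms a(1) unfolding orthonormal_wrt_def by auto
  then have "g a a = 0" using orthogonal_span a(2) by blast
  moreover have "g a a = 1" using assms a(1) unfolding orthonormal_wrt_def by auto
  ultimately show False by simp
qed

lemma orthonormal_residual_orthogonal:
  assumes "finite S" "orthonormal_wrt g S" "t \<in> S"
  shows "g (x - (\<Sum>s\<in>S. g x s *\<^sub>R s)) t = 0"
proof -
  have "(\<Sum>s\<in>S. g x s * g s t) = (\<Sum>s\<in>S. if s = t then g x s else 0)"
    using assms unfolding orthonormal_wrt_def by (intro sum.cong) auto
  then show ?thesis using assms by (simp add: form_simps sum_left)
qed

lemma orthonormal_basis_expansion: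
  assumes o: "orthonormal_wrt g S" and c: "card S = DIM('a)"
  shows "x = (\<Sum>s\<in>S. g x s *\<^sub>R s)"
proof -
  have fin: "finite S" using c by (metis DIM_positive card.infinite less_irrefl)
  then have "span S = UNIV"
    using orthonormal_independent[OF o] c card_eq_dim[of S UNIV] dim_UNIV
    by (metis subset_UNIV subset_antisym)
  define r where "r = x - (\<Sum>s\<in>S. g x s *\<^sub>R s)"
  have "g r r = 0"
    using orthogonal_span orthonormal_residual_orthogonal[OF fin o] \<open>span S = UNIV\<close>
    unfolding r_def by blast
  then have "r = 0" using positive by force
  then show ?thesis unfolding r_def by simp
qed

lemma exists_unit_orthogonal:
  assumes W: "subspace W" and o: "orthonormal_wrt g S" and "S \<subseteq> W" "finite S"
    and "card S < dim W"
  shows "\<exists>x\<in>W. g x x = 1 \<and> (\<forall>s\<in>S. g x s = 0)"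
proof -
  obtain y where y: "y \<in> W" "y \<notin> span S"
    using assms dim_le_card by (metis le_antisym less_imp_le_nat nat_less_le subsetI)
  define x0 where "x0 = y - (\<Sum>s\<in>S. g y s *\<^sub>R s)"
  have x0W: "x0 \<in> W" unfolding x0_def
    using assms y(1) by (auto intro!: subspace_diff subspace_sum subspace_scale)
  have perp: "\<forall>s\<in>S. g x0 s = 0"
    unfolding x0_def using orthonormal_residual_orthogonal assms by blast
  have "x0 \<noteq> 0"
  proof
    assume "x0 = 0"
    then have "y = (\<Sum>s\<in>S. g y s *\<^sub>R s)" unfolding x0_def by simp
    also have "\<dots> \<in> span S" by (intro span_sum span_scale span_base)
    finally show False using y(2) by simp
  qed
  then have pos: "g x0 x0 > 0" by (rule positive)
  define x where "x = (1 / sqrt (g x0 x0)) *\<^sub>R x0"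
  have "g x x = 1" unfolding x_def using pos by (simp add: lmul rmul)
  moreover have "x \<in> W" unfolding x_def using x0W W by (simp add: subspace_scale)
  moreover have "\<forall>s\<in>S. g x s = 0" unfolding x_def using perp by (simp add: lmul)
  ultimately show ?thesis by blast
qed

lemma orthonormal_basis_of_subspace:
  assumes W: "subspace W"
  shows "\<exists>S. finite S \<and> orthonormal_wrt g S \<and> S \<subseteq> W \<and> card S = dim W"
proof -
  have "\<exists>S. finite S \<and> orthonormal_wrt g S \<and> S \<subseteq> W \<and> card S = k" if "k \<le> dim W" for k
    using that
  proof (induction k)
    case 0
    show ?case by (rule exI[of _ "{}"]) (simp add: orthonormal_wrt_def)
  next
    case (Suc k)
    then obtain S where S: "finite S" "orthonormal_wrt g S" "S \<subseteq> W" "card S = k" by auto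
    then obtain x where x: "x \<in> W" "g x x = 1" "\<forall>s\<in>S. g x s = 0"
      using exists_unit_orthogonal[OF W S(2) S(3) S(1)] Suc.prems S(4) by auto
    then have "x \<notin> S" by auto
    moreover have "orthonormal_wrt g (insert x S)"
      using S(2) x symmetric unfolding orthonormal_wrt_def by auto
    ultimately show ?case using S x by (intro exI[of _ "insert x S"]) auto
  qed
  then show ?thesis by blast
qed

lemma unit_normal_of_hyperplane:
  assumes W: "subspace W" and dimW: "dim W = DIM('a) - 1"
  shows "\<exists>N. g N N = 1 \<and> (\<forall>z. z \<in> W \<longleftrightarrow> g z N = 0)"
proof -
  obtain S where S: "finite S" "orthonormal_wrt g S" "S \<subseteq> W" "card S = dim W"
    using orthonormal_basis_of_subspace[OF W] by blast
  have "card S < dim (UNIV :: 'a set)" using S(4) dimW DIM_positive[where 'a='a] by simp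
  then obtain N where N: "g N N = 1" "\<forall>s\<in>S. g N s = 0"
    using exists_unit_orthogonal[OF subspace_UNIV S(2) subset_UNIV S(1)] by blast
  have spanS: "span S = W"
    using orthonormal_independent[OF S(2)] S card_eq_dim[of S W] span_minimal[OF S(3) W]
    by (metis subset_antisym)
  have "z \<in> W" if "g z N = 0" for z
  proof -
    have "N \<notin> S" using N by auto
    then have basis: "orthonormal_wrt g (insert N S)" "card (insert N S) = DIM('a)"
      using S N symmetric dimW DIM_positive[where 'a='a] unfolding orthonormal_wrt_def by auto
    have "z = (\<Sum>t\<in>insert N S. g z t *\<^sub>R t)" by (rule orthonormal_basis_expansion[OF basis])
    also have "\<dots> = (\<Sum>t\<in>S. g z t *\<^sub>R t)" using S(1) \<open>N \<notin> S\<close> that by simp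
    also have "\<dots> \<in> span S" by (intro span_sum span_scale span_base)
    finally show ?thesis using spanS by simp
  qed
  moreover have "g z N = 0" if "z \<in> W" for z
    using orthogonal_span[OF N(2)] that spanS symmetric by metis
  ultimately show ?thesis using N(1) by blast
qed

end

section \<open>Unitary frames of a hermitian Lie algebra\<close>

locale hermitian_algebra =
  fixes br :: "'a::euclidean_space \<Rightarrow> 'a \<Rightarrow> 'a" and J :: "'a \<Rightarrow> 'a"
    and \<omega> :: "'a \<Rightarrow> 'a \<Rightarrow> real" and n :: nat
  assumes hermitian: "hermitian_lie_algebra br J \<omega>"
    and dim_eq: "DIM('a) = 2 * n"
begin

lemma bracket_bilinear: "bilinear br"
  and bracket_self: "br x x = 0"
  and J_linear: "linear J"
  and J_J: "J (J x) = - x"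
  and integrable: "br (J x) (J y) = br x y + J (br (J x) y) + J (br x (J y))"
  and omega_bilinear: "bilinear \<omega>"
  and omega_antisym: "\<omega> x y = - \<omega> y x"
  and omega_J_J: "\<omega> (J x) (J y) = \<omega> x y"
  and omega_J_positive: "x \<noteq> 0 \<Longrightarrow> \<omega> x (J x) > 0"
  using hermitian
  unfolding hermitian_lie_algebra_def lie_algebra_def integrable_cx_structure_def by blast+

lemma bracket_antisym: "br x y = - br y x"
proof -
  have "br (x + y) (x + y) = 0" by (rule bracket_self)
  then have "br x x + br y x + (br x y + br y y) = 0"
    by (simp add: bilinear_ladd[OF bracket_bilinear] bilinear_radd[OF bracket_bilinear])
  then have "br x y + br y x = 0" by (simp add: bracket_self add.commute)
  then show ?thesis by (simp add: eq_neg_iff_add_eq_0)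
qed

lemmas J_simps = linear_add[OF J_linear] linear_neg[OF J_linear] linear_diff[OF J_linear]
  linear_scale[OF J_linear] linear_0[OF J_linear]

lemma n_pos: "1 \<le> n"
  using dim_eq DIM_positive[where 'a='a] by linarith

definition metric :: "'a \<Rightarrow> 'a \<Rightarrow> real" where
  "metric x y = \<omega> x (J y)"

lemma omega_eq_metric: "\<omega> x y = - metric x (J y)"
  unfolding metric_def by (simp add: J_J bilinear_rneg[OF omega_bilinear])

lemma metric_J_left: "metric (J x) y = - metric x (J y)"
  unfolding metric_def using omega_J_J[of x y] by (simp add: J_J bilinear_rneg[OF omega_bilinear])

lemma metric_J_J: "metric (J x) (J y) = metric x y"
  unfolding metric_def by (simp add: omega_J_J)

lemma metric_self_J: "metric x (J x) = 0"
  unfolding metric_def using omega_antisym[of x x] by (simp add: J_J bilinear_rneg[OF omega_bilinear])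

lemma metric_symmetric: "metric x y = metric y x"
  unfolding metric_def using omega_J_J[of y "J x"] omega_antisym[of x "J y"]
  by (simp add: J_J bilinear_rneg[OF omega_bilinear])

sublocale inner_form metric
proof
  show "bilinear metric"
    unfolding metric_def bilinear_def
    using omega_bilinear linear_compose[OF J_linear] unfolding bilinear_def o_def by auto
qed (auto simp: metric_symmetric metric_def omega_J_positive)

definition unitary_frame :: "(nat \<Rightarrow> 'a) \<Rightarrow> nat \<Rightarrow> bool" where
  "unitary_frame f k \<longleftrightarrow> (\<forall>i\<in>{1..k}. \<forall>j\<in>{1..k}.
     metric (f i) (f j) = (if i = j then 1 else 0) \<and> metric (f i) (J (f j)) = 0)"

lemma unitary_frame_orthonormal:
  assumes "unitary_frame f k"
  shows "orthonormal_wrt metric (f ` {1..k} \<union> (\<lambda>i. J (f i)) ` {1..k})"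
proof -
  have f: "metric (f i) (f j) = (if f i = f j then 1 else 0)"
    "metric (f i) (J (f j)) = (if f i = J (f j) then 1 else 0)"
    "metric (J (f i)) (f j) = (if J (f i) = f j then 1 else 0)"
    "metric (J (f i)) (J (f j)) = (if J (f i) = J (f j) then 1 else 0)"
    if "i \<in> {1..k}" "j \<in> {1..k}" for i j
  proof -
    have unit: "metric (f l) (f l) = 1" if "l \<in> {1..k}" for l
      using assms that unfolding unitary_frame_def by auto
    have "metric (f i) (f j) = (if i = j then 1 else 0)" "metric (f i) (J (f j)) = 0"
      using assms that unfolding unitary_frame_def by auto
    moreover have "J (f i) = J (f j) \<longleftrightarrow> f i = f j"
      by (metis J_J neg_equal_iff_equal)
    ultimately show "metric (f i) (f j) = (if f i = f j then 1 else 0)"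
      "metric (f i) (J (f j)) = (if f i = J (f j) then 1 else 0)"
      "metric (J (f i)) (f j) = (if J (f i) = f j then 1 else 0)"
      "metric (J (f i)) (J (f j)) = (if J (f i) = J (f j) then 1 else 0)"
      using unit[OF that(1)] unit[OF that(2)] that metric_J_left[of "f i" "f j"]
        metric_J_J[of "f i" "f j"]
      by auto
  qed
  show ?thesis unfolding orthonormal_wrt_def using f by auto
qed

lemma unitary_frame_extend:
  assumes f: "unitary_frame f k" and "k < n"
  shows "\<exists>x. unitary_frame (f(Suc k := x)) (Suc k)"
proof -
  define S where "S = f ` {1..k} \<union> (\<lambda>i. J (f i)) ` {1..k}"
  have "card S \<le> k + k"
    unfolding S_def
    by (rule order_trans[OF card_Un_le]) (intro add_mono order_trans[OF card_image_le]; simp)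
  then have "card S < dim (UNIV :: 'a set)" using \<open>k < n\<close> dim_eq by simp
  then obtain x where x: "metric x x = 1" "\<forall>s\<in>S. metric x s = 0"
    using exists_unit_orthogonal[OF subspace_UNIV unitary_frame_orthonormal[OF f]]
    unfolding S_def by auto
  have perp: "metric x (f j) = 0" "metric x (J (f j)) = 0" if "j \<in> {1..k}" for j
    using x(2) that unfolding S_def by auto
  have perp': "metric (f j) x = 0" "metric (f j) (J x) = 0" if "j \<in> {1..k}" for j
    using perp[OF that] metric_J_left[of "f j" x] metric_symmetric[of x "f j"]
      metric_symmetric[of x "J (f j)"]
    by auto
  have "metric (f i) (f j) = (if i = j then 1 else 0)" "metric (f i) (J (f j)) = 0"
    if "i \<in> {1..k}" "j \<in> {1..k}" for i j
    using f that unfolding unitary_frame_def by auto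
  then have "unitary_frame (f(Suc k := x)) (Suc k)"
    using perp perp' x(1) metric_self_J[of x] unfolding unitary_frame_def
    by (simp add: atLeastAtMostSuc_conv)
  then show ?thesis ..
qed

lemma unitary_frame_exists:
  assumes "metric f1 f1 = 1"
  shows "\<exists>f. f 1 = f1 \<and> unitary_frame f n"
proof -
  have "\<exists>f. f 1 = f1 \<and> unitary_frame f k" if "1 \<le> k" "k \<le> n" for k
    using that
  proof (induction k rule: nat_induct_at_least)
    case base
    show ?case using assms metric_self_J[of f1] unfolding unitary_frame_def by auto
  next
    case (Suc k)
    then obtain f where "f 1 = f1" "unitary_frame f k" by auto
    moreover obtain x where "unitary_frame (f(Suc k := x)) (Suc k)"
      using unitary_frame_extend[OF \<open>unitary_frame f k\<close>] Suc.prems by auto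
    moreover have "(f(Suc k := x)) 1 = f 1" using Suc.hyps by simp
    ultimately show ?case by metis
  qed
  then show ?thesis using n_pos by blast
qed

definition adapted_basis :: "(nat \<Rightarrow> 'a) \<Rightarrow> bool" where
  "adapted_basis b \<longleftrightarrow>
     (\<forall>i\<in>{1..2*n}. \<forall>j\<in>{1..2*n}. metric (b i) (b j) = (if i = j then 1 else 0)) \<and>
     (\<forall>i\<in>{1..n}. J (b i) = b (2*n+1-i))"

lemma adapted_basis_exists:
  assumes "metric N N = 1"
  shows "\<exists>b. adapted_basis b \<and> b (2*n) = N"
proof -
  have "metric (- J N) (- J N) = 1" using assms by (simp add: form_simps metric_J_J)
  then obtain f where f: "f 1 = - J N" "unitary_frame f n" using unitary_frame_exists by blast
  have frame: "metric (f i) (f j) = (if i = j then 1 else 0)" "metric (f i) (J (f j)) = 0"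
    "metric (J (f i)) (f j) = 0" "metric (J (f i)) (J (f j)) = (if i = j then 1 else 0)"
    if "i \<in> {1..n}" "j \<in> {1..n}" for i j
    using f(2) that metric_J_left[of "f i" "f j"] unfolding unitary_frame_def
    by (auto simp: metric_J_J)
  define b where "b i = (if i \<le> n then f i else J (f (2*n+1-i)))" for i
  have "metric (b i) (b j) = (if i = j then 1 else 0)" if "i \<in> {1..2*n}" "j \<in> {1..2*n}" for i j
  proof -
    have mirror: "2*n+1-l \<in> {1..n}" if "l \<in> {1..2*n}" "\<not> l \<le> n" for l
      using that by auto
    show ?thesis
    proof (cases "i \<le> n"; cases "j \<le> n")
      assume "i \<le> n" "j \<le> n"
      then show ?thesis using that frame(1)[of i j] by (simp add: b_def)
    next
      assume "i \<le> n" "\<not> j \<le> n"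
      then show ?thesis using that frame(2)[OF _ mirror] by (simp add: b_def)
    next
      assume "\<not> i \<le> n" "j \<le> n"
      then show ?thesis using that frame(3)[OF mirror] by (simp add: b_def)
    next
      assume "\<not> i \<le> n" "\<not> j \<le> n"
      then show ?thesis using that frame(4)[OF mirror mirror] by (auto simp: b_def)
    qed
  qed
  moreover have "J (b i) = b (2*n+1-i)" if "i \<in> {1..n}" for i
  proof -
    have "\<not> 2*n+1-i \<le> n" "2*n+1-(2*n+1-i) = i" using that by auto
    then show ?thesis using that by (simp add: b_def)
  qed
  moreover have "b (2*n) = N" using n_pos f(1) by (simp add: b_def J_simps J_J)
  ultimately show ?thesis unfolding adapted_basis_def by blast
qed

end

locale adapted_frame = hermitian_algebra +
  fixes b :: "nat \<Rightarrow> 'a"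
  assumes adapted: "adapted_basis b"
begin

lemma basis_orthonormal:
  "i \<in> {1..2*n} \<Longrightarrow> j \<in> {1..2*n} \<Longrightarrow> metric (b i) (b j) = (if i = j then 1 else 0)"
  using adapted unfolding adapted_basis_def by blast

lemma J_basis_low: "i \<in> {1..n} \<Longrightarrow> J (b i) = b (2*n+1-i)"
  using adapted unfolding adapted_basis_def by blast

lemma J_basis_high:
  assumes "i \<in> {n+1..2*n}" shows "J (b i) = - b (2*n+1-i)"
proof -
  have "2*n+1-i \<in> {1..n}" "2*n+1-(2*n+1-i) = i" using assms by auto
  then have "J (b (2*n+1-i)) = b i" using J_basis_low by metis
  then show ?thesis using J_J[of "b (2*n+1-i)"] by simp
qed

lemma basis_expansion: "x = (\<Sum>i=1..2*n. metric x (b i) *\<^sub>R b i)"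
proof -
  have inj: "inj_on b {1..2*n}"
  proof (rule inj_onI)
    fix i j assume "i \<in> {1..2*n}" "j \<in> {1..2*n}" "b i = b j"
    then show "i = j" using basis_orthonormal[of i j] basis_orthonormal[of j j] by (auto split: if_splits)
  qed
  have "orthonormal_wrt metric (b ` {1..2*n})"
    unfolding orthonormal_wrt_def using basis_orthonormal inj by (auto simp: inj_on_eq_iff)
  moreover have "card (b ` {1..2*n}) = DIM('a)" using card_image[OF inj] dim_eq by simp
  ultimately have "x = (\<Sum>s\<in>b ` {1..2*n}. metric x s *\<^sub>R s)"
    by (rule orthonormal_basis_expansion)
  also have "\<dots> = (\<Sum>i=1..2*n. metric x (b i) *\<^sub>R b i)"
    by (rule sum.reindex[OF inj, unfolded o_def])
  finally show ?thesis .
qed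

definition coords :: "'a \<Rightarrow> nat \<Rightarrow> real" where
  "coords x = (\<lambda>i. if i \<in> {1..2*n} then metric x (b i) else 0)"

lemma metric_linear_image:
  assumes "linear L"
  shows "metric (L z) w = (\<Sum>j=1..2*n. coords z j * metric (L (b j)) w)"
proof -
  have "L z = L (\<Sum>j=1..2*n. metric z (b j) *\<^sub>R b j)"
    by (rule arg_cong[where f = L, OF basis_expansion])
  also have "\<dots> = (\<Sum>j=1..2*n. metric z (b j) *\<^sub>R L (b j))"
    by (simp add: linear_sum[OF assms] linear_scale[OF assms])
  finally have "L z = (\<Sum>j=1..2*n. metric z (b j) *\<^sub>R L (b j))" .
  then show ?thesis unfolding coords_def by (simp add: sum_left)
qed

lemma metric_eq_coords: "metric x z = (\<Sum>i=1..2*n. coords x i * coords z i)"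
proof -
  have "metric (b i) z = coords z i" if "i \<in> {1..2*n}" for i
    using that metric_symmetric[of z "b i"] by (simp add: coords_def)
  then show ?thesis using metric_linear_image[OF linear_id, of x z] by simp
qed

lemma coords_in_Rsp: "coords x \<in> Rsp n"
  unfolding coords_def Rsp_def by auto

lemma linear_to_R_coords: "linear_to_R coords"
  unfolding linear_to_R_def coords_def by (auto simp: fun_eq_iff form_simps)

lemma bij_betw_coords: "bij_betw coords UNIV (Rsp n)"
proof (rule bij_betw_byWitness[where f' = "\<lambda>v. \<Sum>i=1..2*n. v i *\<^sub>R b i"])
  have "(\<Sum>i=1..2*n. coords x i *\<^sub>R b i) = (\<Sum>i=1..2*n. metric x (b i) *\<^sub>R b i)" for x
    by (intro sum.cong) (auto simp: coords_def)
  then show "\<forall>x\<in>UNIV. (\<Sum>i=1..2*n. coords x i *\<^sub>R b i) = x"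
    using basis_expansion by metis
  have "metric (\<Sum>i=1..2*n. v i *\<^sub>R b i) (b j) = v j" if "j \<in> {1..2*n}" for v j
    using that by (simp add: sum_left basis_orthonormal if_distrib cong: if_cong)
  then show "\<forall>v\<in>Rsp n. coords (\<Sum>i=1..2*n. v i *\<^sub>R b i) = v"
    unfolding coords_def Rsp_def by (auto simp: fun_eq_iff)
qed (use coords_in_Rsp in auto)

lemma coords_J: "coords (J x) = Jstd n (coords x)"
proof
  fix i
  consider (low) "i \<in> {1..n}" | (high) "i \<in> {n+1..2*n}" | (out) "i \<notin> {1..2*n}"
    by fastforce
  then show "coords (J x) i = Jstd n (coords x) i"
  proof cases
    case low
    then have "coords (J x) i = - metric x (b (2*n+1-i))"
      using metric_J_left[of x "b i"] J_basis_low[OF low] by (simp add: coords_def)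
    moreover have "i \<in> {1..2*n}" "2*n+1-i \<in> {1..2*n}" using low by auto
    ultimately show ?thesis using low by (simp add: coords_def Jstd_def)
  next
    case high
    then have "coords (J x) i = metric x (b (2*n+1-i))"
      using metric_J_left[of x "b i"] J_basis_high[OF high] by (simp add: coords_def form_simps)
    moreover have "i \<in> {1..2*n}" "2*n+1-i \<in> {1..2*n}" "\<not> i \<le> n" using high by auto
    ultimately show ?thesis using high by (simp add: coords_def Jstd_def)
  next
    case out
    then show ?thesis by (auto simp: coords_def Jstd_def)
  qed
qed

lemma omega_std_coords: "\<omega>std n (coords x) (coords y) = \<omega> x y"
proof -
  have "\<omega> x y = - metric x (J y)" by (rule omega_eq_metric)
  also have "\<dots> = - (\<Sum>i=1..2*n. coords x i * Jstd n (coords y) i)"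
    by (simp only: metric_eq_coords[of x "J y"] coords_J)
  also have "\<dots> = \<omega>std n (coords x) (coords y)" by (rule omega_std_Jstd[symmetric])
  finally show ?thesis by simp
qed

end

section \<open>The normal form\<close>

locale normal_frame = adapted_frame +
  fixes I :: "'a set"
  assumes ideal: "lie_ideal br I" and abelian: "abelian_subalg br I"
    and ideal_eq_perp: "z \<in> I \<longleftrightarrow> metric z (b (2*n)) = 0"
begin

abbreviation N :: 'a where "N \<equiv> b (2*n)"

lemma bracket_in_ideal: "y \<in> I \<Longrightarrow> br x y \<in> I"
  using ideal unfolding lie_ideal_def by blast

lemma bracket_ideal_zero: "x \<in> I \<Longrightarrow> y \<in> I \<Longrightarrow> br x y = 0"
  using abelian unfolding abelian_subalg_def by blast

lemma N_unit: "metric N N = 1"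
  using basis_orthonormal[of "2*n" "2*n"] n_pos by simp

lemma basis_first: "b 1 = - J N"
  using J_basis_low[of 1] n_pos J_J[of "b 1"] by simp

lemma basis_in_ideal:
  assumes "j \<in> {1..2*n-1}" shows "b j \<in> I"
proof -
  have "j \<in> {1..2*n}" "2*n \<in> {1..2*n}" "j \<noteq> 2*n" using assms n_pos by auto
  then show ?thesis using basis_orthonormal[of j "2*n"] ideal_eq_perp by simp
qed

lemma J_in_ideal:
  assumes "u \<in> I" "metric u (b 1) = 0" shows "J u \<in> I"
proof -
  have "metric (J u) N = - metric u (J N)" by (rule metric_J_left)
  also have "\<dots> = metric u (b 1)" unfolding basis_first by (simp add: form_simps)
  finally show ?thesis using assms ideal_eq_perp by simp
qed

text \<open>Both J N and J u lie in the abelian ideal, so the integrability condition for the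
  pair (N, u) collapses to [N, u] = - J [N, J u].\<close>
lemma ad_N_commutes_J:
  assumes "u \<in> I" "J u \<in> I" shows "J (br N u) = br N (J u)"
proof -
  have JN: "J N \<in> I"
    using ideal_eq_perp metric_J_left[of N N] metric_self_J[of N] by simp
  have "br (J N) (J u) = br N u + J (br (J N) u) + J (br N (J u))" by (rule integrable)
  then have "br N u = - J (br N (J u))"
    using bracket_ideal_zero[OF JN assms(2)] bracket_ideal_zero[OF JN assms(1)]
    by (simp add: J_simps eq_neg_iff_add_eq_0)
  then show ?thesis by (simp add: J_simps J_J)
qed

lemma ad_N_perp_first:
  assumes "u \<in> I" "J u \<in> I" shows "metric (br N u) (b 1) = 0"
proof -
  have "metric (br N u) (b 1) = metric (J (br N u)) N"
    using metric_J_left[of "br N u" N] unfolding basis_first by (simp add: form_simps)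
  also have "\<dots> = 0"
    using ad_N_commutes_J[OF assms] bracket_in_ideal[OF assms(2)] ideal_eq_perp by simp
  finally show ?thesis .
qed

definition ad_matrix :: "nat \<Rightarrow> nat \<Rightarrow> real" where
  "ad_matrix i j = metric (br N (b j)) (b i)"

definition ad_c :: real where "ad_c = ad_matrix 1 1"

definition ad_d :: "nat \<Rightarrow> real" where "ad_d k = ad_matrix (k+1) 1"

lemma coords_last: "coords z (2*n) = metric z N"
  using n_pos by (simp add: coords_def)

lemma metric_ad_N:
  assumes "z \<in> I"
  shows "metric (br N z) w =
    coords z 1 * metric (br N (b 1)) w + (\<Sum>j=2..2*n-1. coords z j * metric (br N (b j)) w)"
proof -
  have "linear (br N)" using bracket_bilinear unfolding bilinear_def by blast
  moreover have "coords z (2*n) = 0" using assms ideal_eq_perp coords_last by simp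
  ultimately show ?thesis
    using metric_linear_image[of "br N" z w]
      sum_first_middle_last[OF n_pos, of "\<lambda>j. coords z j * metric (br N (b j)) w"]
    by simp
qed

lemma coords_ad_N:
  assumes z: "z \<in> I"
  shows "coords (br N z) = Dmap n ad_matrix ad_c ad_d (coords z)"
proof
  fix i
  consider (first) "i = 1" | (middle) "i \<in> {2..2*n-1}" | (last) "i = 2*n" | (out) "i \<notin> {1..2*n}"
    by fastforce
  then show "coords (br N z) i = Dmap n ad_matrix ad_c ad_d (coords z) i"
  proof cases
    case first
    have "metric (br N (b j)) (b 1) = 0" if "j \<in> {2..2*n-1}" for j
    proof (rule ad_N_perp_first)
      show "b j \<in> I" using that by (auto intro: basis_in_ideal)
      then show "J (b j) \<in> I" using that basis_orthonormal[of j 1] by (auto intro: J_in_ideal)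
    qed
    then show ?thesis
      using first metric_ad_N[OF z, of "b 1"] n_pos
      by (simp add: coords_def Dmap_def ad_c_def ad_matrix_def)
  next
    case middle
    then have "i \<in> {1..2*n}" by auto
    then have "coords (br N z) i = metric (br N z) (b i)" by (simp add: coords_def)
    also have "\<dots> = ad_d (i-1) * coords z 1 + Amap n ad_matrix (coords z) i"
      using middle metric_ad_N[OF z, of "b i"]
      by (simp add: ad_d_def ad_matrix_def Amap_def mult.commute)
    finally show ?thesis using middle by (simp add: Dmap_def)
  next
    case last
    then show ?thesis
      using bracket_in_ideal[OF z] ideal_eq_perp coords_last Dmap_last[OF n_pos] by simp
  next
    case out
    then show ?thesis by (auto simp: coords_def Dmap_def)
  qed
qed

definition ideal_part :: "'a \<Rightarrow> 'a" where
  "ideal_part x = x - metric x N *\<^sub>R N"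

lemma ideal_part_in_ideal: "ideal_part x \<in> I"
  using N_unit ideal_eq_perp by (simp add: ideal_part_def form_simps)

lemma coords_ideal_part: "i \<noteq> 2*n \<Longrightarrow> coords (ideal_part x) i = coords x i"
  using basis_orthonormal[of "2*n" i] metric_symmetric[of N "b i"] n_pos
  by (auto simp: coords_def ideal_part_def form_simps)

lemma bracket_decomposition:
  "br x y = metric x N *\<^sub>R br N (ideal_part y) - metric y N *\<^sub>R br N (ideal_part x)"
proof -
  have "br x y = br (ideal_part x + metric x N *\<^sub>R N) (ideal_part y + metric y N *\<^sub>R N)"
    by (simp add: ideal_part_def)
  also have "\<dots> = metric x N *\<^sub>R br N (ideal_part y) + metric y N *\<^sub>R br (ideal_part x) N"
    using bracket_ideal_zero[OF ideal_part_in_ideal ideal_part_in_ideal] bracket_self[of N]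
    by (simp add: bilinear_ladd[OF bracket_bilinear] bilinear_radd[OF bracket_bilinear]
        bilinear_lmul[OF bracket_bilinear] bilinear_rmul[OF bracket_bilinear])
  finally show ?thesis using bracket_antisym[of "ideal_part x" N] by simp
qed

lemma coords_bracket: "coords (br x y) = mu n ad_matrix ad_c ad_d (coords x) (coords y)"
proof -
  have D: "coords (br N (ideal_part z)) = Dmap n ad_matrix ad_c ad_d (coords z)" for z
  proof -
    have "coords (br N (ideal_part z)) = Dmap n ad_matrix ad_c ad_d (coords (ideal_part z))"
      by (rule coords_ad_N[OF ideal_part_in_ideal])
    also have "\<dots> = Dmap n ad_matrix ad_c ad_d (coords z)"
      by (rule Dmap_ignores_last[OF n_pos coords_ideal_part])
    finally show ?thesis .
  qed
  have "coords (br x y) = (\<lambda>i. metric x N * coords (br N (ideal_part y)) i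
                              - metric y N * coords (br N (ideal_part x)) i)"
    unfolding bracket_decomposition[of x y] by (simp add: coords_def form_simps fun_eq_iff)
  then show ?thesis unfolding D mu_def coords_last .
qed

lemma ad_matrix_complex: "A_complex n ad_matrix"
  unfolding A_complex_def
proof
  fix w assume w: "w \<in> Vsp n"
  have "w \<in> Rsp n" unfolding Rsp_def
  proof (intro CollectI allI impI)
    fix i assume "i \<notin> {1..2*n}"
    then have "i \<notin> {2..2*n-1}" by auto
    then show "w i = 0" using w unfolding Vsp_def by blast
  qed
  then obtain u where u: "coords u = w"
    using bij_betw_coords unfolding bij_betw_def by (metis imageE)
  have w_ends: "w 1 = 0" "w (2*n) = 0" "Jstd n w 1 = 0"
    using w n_pos unfolding Vsp_def Jstd_def by auto
  have "metric u (b 1) = coords u 1" using n_pos by (simp add: coords_def)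
  then have "metric u (b 1) = 0" using u w_ends(1) by simp
  moreover have "u \<in> I" using coords_last[of u] u w_ends(2) ideal_eq_perp by simp
  ultimately have uI: "u \<in> I" "J u \<in> I" using J_in_ideal by auto
  have Au: "coords (br N u) = Amap n ad_matrix w"
    using coords_ad_N[OF uI(1), unfolded u] Dmap_eq_Amap[of w, OF w_ends(1)] by simp
  have "Amap n ad_matrix (Jstd n w) = Dmap n ad_matrix ad_c ad_d (coords (J u))"
    using Dmap_eq_Amap[of "Jstd n w", OF w_ends(3)] coords_J[of u, unfolded u] by simp
  also have "\<dots> = coords (J (br N u))"
    using coords_ad_N[OF uI(2)] ad_N_commutes_J[OF uI] by simp
  also have "\<dots> = Jstd n (Amap n ad_matrix w)" using coords_J[of "br N u"] Au by simp
  finally show "Amap n ad_matrix (Jstd n w) = Jstd n (Amap n ad_matrix w)" .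
qed

end

context hermitian_algebra
begin

lemma ideal_unit_normal:
  assumes "lie_ideal br I" "dim I = DIM('a) - 1"
  shows "\<exists>N. metric N N = 1 \<and> (\<forall>z. z \<in> I \<longleftrightarrow> metric z N = 0) \<and>
             metric (br N (J N)) (J N) \<ge> 0"
proof -
  obtain N where N: "metric N N = 1" "\<forall>z. z \<in> I \<longleftrightarrow> metric z N = 0"
    using unit_normal_of_hyperplane assms unfolding lie_ideal_def by blast
  have flip: "metric (br (- N) (J (- N))) (J (- N)) = - metric (br N (J N)) (J N)"
    by (simp add: J_simps form_simps bilinear_lneg[OF bracket_bilinear]
        bilinear_rneg[OF bracket_bilinear])
  have neg: "metric (- N) (- N) = 1" "\<forall>z. z \<in> I \<longleftrightarrow> metric z (- N) = 0"
    using N by (simp_all add: form_simps)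
  show ?thesis
  proof (cases "metric (br N (J N)) (J N) \<ge> 0")
    case True
    then show ?thesis using N by blast
  next
    case False
    then show ?thesis using neg flip by (intro exI[of _ "- N"]) auto
  qed
qed

lemma normal_form:
  assumes "lie_ideal br I" "abelian_subalg br I" "dim I = DIM('a) - 1"
  shows "\<exists>a c d \<phi>. A_complex n a \<and> c \<ge> 0 \<and> linear_to_R \<phi> \<and> bij_betw \<phi> UNIV (Rsp n) \<and>
            (\<forall>x y. \<phi> (br x y) = mu n a c d (\<phi> x) (\<phi> y)) \<and>
            (\<forall>x. \<phi> (J x) = Jstd n (\<phi> x)) \<and>
            (\<forall>x y. \<omega>std n (\<phi> x) (\<phi> y) = \<omega> x y)"
proof -
  obtain N0 where N0: "metric N0 N0 = 1" "\<forall>z. z \<in> I \<longleftrightarrow> metric z N0 = 0"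
    "metric (br N0 (J N0)) (J N0) \<ge> 0"
    using ideal_unit_normal[OF assms(1,3)] by blast
  obtain b where b: "adapted_basis b" "b (2*n) = N0"
    using adapted_basis_exists[OF N0(1)] by blast
  interpret normal_frame br J \<omega> n b I
    by unfold_locales (use assms b N0 in auto)
  have "ad_c = metric (br N0 (J N0)) (J N0)"
    unfolding ad_c_def ad_matrix_def basis_first b(2)
    by (simp add: form_simps bilinear_rneg[OF bracket_bilinear])
  then show ?thesis
    using N0(3) ad_matrix_complex linear_to_R_coords bij_betw_coords coords_bracket coords_J
      omega_std_coords
    by (intro exI[of _ ad_matrix] exI[of _ ad_c] exI[of _ ad_d] exI[of _ coords]) auto
qed

end

theorem lemma6p1:
  fixes br :: "'a::euclidean_space \<Rightarrow> 'a \<Rightarrow> 'a" and J :: "'a \<Rightarrow> 'a"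
    and \<omega> :: "'a \<Rightarrow> 'a \<Rightarrow> real" and n :: nat
  assumes herm: "hermitian_lie_algebra br J \<omega>"
    and dimg: "DIM('a) = 2 * n"
    and ideal: "\<exists>I. lie_ideal br I \<and> abelian_subalg br I \<and> dim I = DIM('a) - 1"
  shows "(\<exists>a c d \<phi>. A_complex n a \<and> c \<ge> 0 \<and>
            linear_to_R \<phi> \<and> bij_betw \<phi> UNIV (Rsp n) \<and>
            (\<forall>x y. \<phi> (br x y) = mu n a c d (\<phi> x) (\<phi> y)) \<and>
            (\<forall>x. \<phi> (J x) = Jstd n (\<phi> x)) \<and>
            (\<forall>x y. \<omega>std n (\<phi> x) (\<phi> y) = \<omega> x y))
       \<and> (\<forall>(a :: nat \<Rightarrow> nat \<Rightarrow> real) (c::real) (d :: nat \<Rightarrow> real). A_complex n a \<longrightarrow>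
            (\<forall>X\<in>Rsp n. \<forall>Y\<in>Rsp n. chern_ricci_form n (mu n a c d) (Jstd n) X Y
                = - (1/2) * c * (2*c + trA n a) * (X 1 * Y (2*n) - X (2*n) * Y 1)) \<and>
            (\<forall>X\<in>Rsp n. chern_ricci_op n (mu n a c d) (Jstd n) (\<omega>std n) X
                = (\<lambda>i. (- (1/2) * c * (2*c + trA n a)) * pistd n X i)))"
proof -
  interpret hermitian_algebra br J \<omega> n using herm dimg by unfold_locales
  obtain I where I: "lie_ideal br I" "abelian_subalg br I" "dim I = DIM('a) - 1"
    using ideal by blast
  show ?thesis
    using normal_form[OF I] chern_ricci_form_mu[OF n_pos] chern_ricci_op_mu[OF n_pos] by auto
qed

end
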